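(* Let $\mathcal{X}$ be an $n$-premaniplex and $(\mathcal{Y},\eta)$ an $(n,m)$-voltage operator such that $\mathcal{X}\rtimes_\eta\mathcal{Y}$ is connected. Let $\gamma\in\operatorname{Aut}(\mathcal{X}\rtimes_\eta\mathcal{Y})$ and $\tau\in\operatorname{Aut}(\mathcal{Y})$. If for some flag $(x_0,y_0)$ and some $x_1\in\mathcal{X}$ we have $(x_0,y_0)\gamma=(x_1,y_0\tau)$, then $\gamma$ is a lift of $\tau$, i.e. the $\mathcal{Y}$-coordinate of $(x,y)\gamma$ is $y\tau$ for every flag $(x,y)$.
   Context: An $n$-premaniplex is an edge-coloured graph (semi-edges and parallel edges allowed) with colours $\{0,\dots,n-1\}$ such that every vertex (flag) is the start of exactly one dart of each colour, and for $|i-j|\ge2$ alternating $i,j$-paths of length 4 are closed; $x^i$ is the $i$-adjacent flag of $x$. $\mathcal{C}^n=\langle r_0,\dots,r_{n-1}\mid r_i^2,\ (r_ir_j)^2\ (|i-j|\ge2)\rangle$ acts on the left on flags by $r_ix=x^i$; automorphisms act on the right and commute with this action. For a flag $y$ of an $m$-premaniplex $\mathcal{Y}$ and $\omega\in\mathcal{C}^m$, $W_\omega(y)$ is the homotopy class of paths from $y$ whose colour sequence $i_1,\dots,i_k$ satisfies $r_{i_k}\cdots r_{i_1}=\omega$; these form the fundamental groupoid $\Pi(\mathcal{Y})$. A voltage assignment $\eta:\Pi(\mathcal{Y})\to\mathcal{C}^n$ satisfies $\eta(W_1W_2)=\eta(W_2)\eta(W_1)$; $(\mathcal{Y},\eta)$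 is an $(n,m)$-voltage operator. $\mathcal{X}\rtimes_\eta\mathcal{Y}$ has flags $\mathcal{X}\times\mathcal{Y}$ and $(x,y)^i=(\eta(W_{r_i}(y))x,r_iy)$, $i\in\{0,\dots,m-1\}$; hence $\omega(x,y)=(\eta(W_\omega(y))x,\omega y)$. *)

theory Defs
  imports Main
begin

text \<open>An n-premaniplex: flag set F with i-adjacency adj i (i < n), an involution
  (fixed points are semi-edges); alternating i,j-paths of length 4 with |i-j| >= 2 are closed.\<close>
definition premaniplex :: "nat \<Rightarrow> 'f set \<Rightarrow> (nat \<Rightarrow> 'f \<Rightarrow> 'f) \<Rightarrow> bool" where
  "premaniplex n F adj \<longleftrightarrow>
     (\<forall>i<n. \<forall>x\<in>F. adj i x \<in> F \<and> adj i (adj i x) = x) \<and>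
     (\<forall>i<n. \<forall>j<n. (i + 2 \<le> j \<or> j + 2 \<le> i) \<longrightarrow>
        (\<forall>x\<in>F. adj j (adj i (adj j (adj i x))) = x))"

text \<open>Words over colours, read in path order: the list [i1,...,ik] stands for the element
  r_ik ... r_i1 of the Coxeter group; it acts on a flag x by fold adj [i1,...,ik] x,
  i.e. first i1, then i2, etc.\<close>
abbreviation word_act :: "(nat \<Rightarrow> 'f \<Rightarrow> 'f) \<Rightarrow> nat list \<Rightarrow> 'f \<Rightarrow> 'f" where
  "word_act adj w x \<equiv> fold adj w x"

text \<open>Equality in C^n = <r_0..r_{n-1} | r_i^2, (r_i r_j)^2 (|i-j|>=2)> of the elements
  represented by two words.\<close>
inductive coxeq :: "nat \<Rightarrow> nat list \<Rightarrow> nat list \<Rightarrow> bool" for n :: nat where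
  cox_refl: "coxeq n w w"
| cox_sym: "coxeq n u w \<Longrightarrow> coxeq n w u"
| cox_trans: "coxeq n u v \<Longrightarrow> coxeq n v w \<Longrightarrow> coxeq n u w"
| cox_sq: "i < n \<Longrightarrow> coxeq n (u @ [i, i] @ v) (u @ v)"
| cox_comm: "i < n \<Longrightarrow> j < n \<Longrightarrow> (i + 2 \<le> j \<or> j + 2 \<le> i) \<Longrightarrow>
             coxeq n (u @ [i, j, i, j] @ v) (u @ v)"

abbreviation words :: "nat \<Rightarrow> nat list set" where
  "words n \<equiv> {w. set w \<subseteq> {..<n}}"

text \<open>The fundamental groupoid element W_omega(y) is
  represented by (y, w) with w a word representing omega; eta y w is a word representing
  eta(W_omega(y)) in C^n.  eta must be well defined on homotopy classes and satisfy
  eta(W1 W2) = eta(W2) eta(W1), which in path-order words reads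
  eta y (w1 @ w2) ~ eta y w1 @ eta (w1 y) w2.\<close>
definition voltage_operator ::
  "nat \<Rightarrow> nat \<Rightarrow> 'y set \<Rightarrow> (nat \<Rightarrow> 'y \<Rightarrow> 'y) \<Rightarrow> ('y \<Rightarrow> nat list \<Rightarrow> nat list) \<Rightarrow> bool" where
  "voltage_operator n m FY adjY eta \<longleftrightarrow>
     premaniplex m FY adjY \<and>
     (\<forall>y\<in>FY. \<forall>w\<in>words m. eta y w \<in> words n) \<and>
     (\<forall>y\<in>FY. \<forall>w\<in>words m. \<forall>w'\<in>words m. coxeq m w w' \<longrightarrow> coxeq n (eta y w) (eta y w')) \<and>
     (\<forall>y\<in>FY. \<forall>w1\<in>words m. \<forall>w2\<in>words m.
        coxeq n (eta y (w1 @ w2)) (eta y w1 @ eta (word_act adjY w1 y) w2))"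

definition mix_adj ::
  "('y \<Rightarrow> nat list \<Rightarrow> nat list) \<Rightarrow> (nat \<Rightarrow> 'x \<Rightarrow> 'x) \<Rightarrow> (nat \<Rightarrow> 'y \<Rightarrow> 'y) \<Rightarrow>
   nat \<Rightarrow> 'x \<times> 'y \<Rightarrow> 'x \<times> 'y" where
  "mix_adj eta adjX adjY i p = (word_act adjX (eta (snd p) [i]) (fst p), adjY i (snd p))"

definition connected_premaniplex :: "nat \<Rightarrow> 'f set \<Rightarrow> (nat \<Rightarrow> 'f \<Rightarrow> 'f) \<Rightarrow> bool" where
  "connected_premaniplex n F adj \<longleftrightarrow>
     (\<forall>a\<in>F. \<forall>b\<in>F. \<exists>w\<in>words n. word_act adj w a = b)"

text \<open>Automorphisms (written as functions, acting on the right in the paper).\<close>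
definition is_automorphism :: "nat \<Rightarrow> 'f set \<Rightarrow> (nat \<Rightarrow> 'f \<Rightarrow> 'f) \<Rightarrow> ('f \<Rightarrow> 'f) \<Rightarrow> bool" where
  "is_automorphism n F adj g \<longleftrightarrow>
     bij_betw g F F \<and> (\<forall>i<n. \<forall>x\<in>F. g (adj i x) = adj i (g x))"

end

theory Submission
  imports Defs
begin

text \<open>The \<open>\<Y>\<close>-coordinate of \<open>\<omega>(x, y)\<close> is \<open>\<omega> y\<close>, independently of \<open>x\<close>, and automorphisms
  commute with the action of words.  By connectivity every flag is \<open>\<omega>(x\<^sub>0, y\<^sub>0)\<close> for some
  word \<open>\<omega>\<close>; hence \<open>(\<omega>(x\<^sub>0, y\<^sub>0))\<gamma> = \<omega>((x\<^sub>0, y\<^sub>0)\<gamma>) = \<omega>(x\<^sub>1, y\<^sub>0\<tau>)\<close> has \<open>\<Y>\<close>-coordinate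
  \<open>\<omega>(y\<^sub>0\<tau>) = (\<omega> y\<^sub>0)\<tau>\<close>.\<close>

lemma premaniplex_adj_closed:
  assumes "premaniplex n F adj" and "i < n" and "x \<in> F"
  shows "adj i x \<in> F"
  using assms unfolding premaniplex_def by blast

lemma word_act_closed:
  assumes closed: "\<And>i x. i < n \<Longrightarrow> x \<in> F \<Longrightarrow> adj i x \<in> F"
    and "w \<in> words n" and "x \<in> F"
  shows "word_act adj w x \<in> F"
  using assms(2,3) by (induction w arbitrary: x) (auto intro: closed)

lemma automorphism_word_act:
  assumes "is_automorphism n F adj g"
    and closed: "\<And>i x. i < n \<Longrightarrow> x \<in> F \<Longrightarrow> adj i x \<in> F"
    and "w \<in> words n" and "x \<in> F"
  shows "g (word_act adj w x) = word_act adj w (g x)"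
  using assms(3,4)
proof (induction w arbitrary: x)
  case (Cons i w)
  with assms(1) have "g (adj i x) = adj i (g x)"
    unfolding is_automorphism_def by simp
  with Cons closed show ?case by simp
qed simp

lemma snd_word_act_mix_adj:
  "snd (word_act (mix_adj eta adjX adjY) w p) = word_act adjY w (snd p)"
  by (induction w arbitrary: p) (auto simp: mix_adj_def)

lemma voltage_operator_words:
  assumes "voltage_operator n m FY adjY eta" and "y \<in> FY" and "w \<in> words m"
  shows "eta y w \<in> words n"
  using assms unfolding voltage_operator_def by blast

lemma voltage_operator_adj_closed:
  assumes "voltage_operator n m FY adjY eta" and "i < m" and "y \<in> FY"
  shows "adjY i y \<in> FY"
  using assms(1) premaniplex_adj_closed[OF _ assms(2,3)] unfolding voltage_operator_def by blast

lemma mix_adj_closed: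
  assumes "premaniplex n FX adjX" and "voltage_operator n m FY adjY eta"
    and "i < m" and "p \<in> FX \<times> FY"
  shows "mix_adj eta adjX adjY i p \<in> FX \<times> FY"
proof -
  have "eta (snd p) [i] \<in> words n"
    using voltage_operator_words[OF assms(2), of "snd p" "[i]"] assms(3,4) by auto
  then have "word_act adjX (eta (snd p) [i]) (fst p) \<in> FX"
    using assms(4) by (auto intro: word_act_closed premaniplex_adj_closed[OF assms(1)])
  moreover have "adjY i (snd p) \<in> FY"
    using voltage_operator_adj_closed[OF assms(2,3)] assms(4) by auto
  ultimately show ?thesis
    by (simp add: mix_adj_def mem_Times_iff)
qed

theorem lemma6p8:
  fixes FX :: "'x set" and adjX :: "nat \<Rightarrow> 'x \<Rightarrow> 'x"
    and FY :: "'y set" and adjY :: "nat \<Rightarrow> 'y \<Rightarrow> 'y"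
    and eta :: "'y \<Rightarrow> nat list \<Rightarrow> nat list"
    and \<gamma> :: "'x \<times> 'y \<Rightarrow> 'x \<times> 'y" and \<tau> :: "'y \<Rightarrow> 'y"
    and n m :: nat
  assumes "premaniplex n FX adjX"
    and "voltage_operator n m FY adjY eta"
    and "connected_premaniplex m (FX \<times> FY) (mix_adj eta adjX adjY)"
    and "is_automorphism m (FX \<times> FY) (mix_adj eta adjX adjY) \<gamma>"
    and "is_automorphism m FY adjY \<tau>"
    and "x0 \<in> FX" and "y0 \<in> FY" and "x1 \<in> FX"
    and "\<gamma> (x0, y0) = (x1, \<tau> y0)"
  shows "\<forall>x\<in>FX. \<forall>y\<in>FY. snd (\<gamma> (x, y)) = \<tau> y"
proof (intro ballI)
  fix x y assume "x \<in> FX" and "y \<in> FY"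
  then obtain w where w: "w \<in> words m"
    and xy: "word_act (mix_adj eta adjX adjY) w (x0, y0) = (x, y)"
    using assms(3,6,7) unfolding connected_premaniplex_def by blast
  have y: "y = word_act adjY w y0"
    using snd_word_act_mix_adj[of eta adjX adjY w "(x0, y0)"] xy by simp
  have "\<gamma> (x, y) = word_act (mix_adj eta adjX adjY) w (\<gamma> (x0, y0))"
    using automorphism_word_act[OF assms(4) mix_adj_closed[OF assms(1,2)] w, of "(x0, y0)"]
      xy assms(6,7)
    by simp
  then have "snd (\<gamma> (x, y)) = word_act adjY w (\<tau> y0)"
    by (simp add: snd_word_act_mix_adj assms(9))
  also have "\<dots> = \<tau> y"
    using automorphism_word_act[OF assms(5) voltage_operator_adj_closed[OF assms(2)] w assms(7)] y
    by simp
  finally show "snd (\<gamma> (x, y)) = \<tau> y" .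
qed

end
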